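(* For every finite nonempty set of points $Z\subset\mathbb{S}_2$ and every positive integer $m$ one has $\alpha(mZ)<\alpha((m+5)Z)$.
   Context: Let $P_1,P_2\in\mathbb{P}^2(\mathbb{C})$ be two general (distinct) points and $f\colon\mathbb{S}_2\to\mathbb{P}^2$ the blow-up at them, with exceptional curves $E_i=f^{-1}(P_i)$; let $H$ be the pullback of the class of a line and $\mathbb{L}_2=3H-E_1-E_2=-K_{\mathbb{S}_2}$. For a finite set $Z\subset\mathbb{S}_2$ with ideal sheaf $\mathcal{I}_Z$ and a positive integer $m$, $\alpha(mZ)=\min\{d\ge 0:\ H^0(\mathbb{S}_2,d\mathbb{L}_2\otimes\mathcal{I}_Z^{(m)})\neq 0\}$, i.e. the least $d$ such that some effective divisor $D\in|d\mathbb{L}_2|$ has multiplicity at least $m$ at every point of $Z$. *)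

theory Defs
  imports Complex_Main
begin

text \<open>Plane curves are given by homogeneous polynomials in x,y,z over the complex
numbers, encoded by their coefficient function: F a b c is the coefficient of
x^a y^b z^c.  The blown-up points are P1 = [1:0:0] and P2 = [0:1:0]
(any two distinct points of the projective plane are projectively equivalent).\<close>

type_synonym poly3 = "nat \<Rightarrow> nat \<Rightarrow> nat \<Rightarrow> complex"
type_synonym poly2 = "nat \<Rightarrow> nat \<Rightarrow> complex"

definition homog_poly :: "nat \<Rightarrow> poly3 \<Rightarrow> bool" where
  "homog_poly n F \<longleftrightarrow> (\<forall>a b c. F a b c \<noteq> 0 \<longrightarrow> a + b + c = n)"

text \<open>Taylor coefficient of h^(i,j,k) in F(p+h), for F with all exponents at most n.\<close>
definition taylor3 :: "nat \<Rightarrow> poly3 \<Rightarrow> complex \<times> complex \<times> complex \<Rightarrow> nat \<Rightarrow> nat \<Rightarrow> nat \<Rightarrow> complex" where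
  "taylor3 n F p i j k =
     (\<Sum>a\<in>{0..n}. \<Sum>b\<in>{0..n}. \<Sum>c\<in>{0..n}.
        F a b c * of_nat (a choose i) * of_nat (b choose j) * of_nat (c choose k)
        * fst p ^ (a - i) * fst (snd p) ^ (b - j) * snd (snd p) ^ (c - k))"

definition mult3_ge :: "nat \<Rightarrow> poly3 \<Rightarrow> complex \<times> complex \<times> complex \<Rightarrow> nat \<Rightarrow> bool" where
  "mult3_ge n F p m \<longleftrightarrow> (\<forall>i j k. i + j + k < m \<longrightarrow> taylor3 n F p i j k = 0)"

definition taylor2 :: "nat \<Rightarrow> poly2 \<Rightarrow> complex \<times> complex \<Rightarrow> nat \<Rightarrow> nat \<Rightarrow> complex" where
  "taylor2 n h p i j =
     (\<Sum>a\<in>{0..n}. \<Sum>b\<in>{0..n}.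
        h a b * of_nat (a choose i) * of_nat (b choose j) * fst p ^ (a - i) * snd p ^ (b - j))"

definition mult2_ge :: "nat \<Rightarrow> poly2 \<Rightarrow> complex \<times> complex \<Rightarrow> nat \<Rightarrow> bool" where
  "mult2_ge n h p m \<longleftrightarrow> (\<forall>i j. i + j < m \<longrightarrow> taylor2 n h p i j = 0)"

text \<open>Points of S_2 (by representatives):
  Off (x,y,z): the point [x:y:z] of P^2 different from P1, P2;
  OnE1 (a,b): the point of E1 given by the tangent direction [a:b] at P1 in the
    affine coordinates (y,z) of the chart x = 1;
  OnE2 (a,b): the point of E2 given by the tangent direction [a:b] at P2 in the
    affine coordinates (x,z) of the chart y = 1.\<close>
datatype S2pt = Off "complex \<times> complex \<times> complex" | OnE1 "complex \<times> complex" | OnE2 "complex \<times> complex"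

fun valid_pt :: "S2pt \<Rightarrow> bool" where
  "valid_pt (Off (x, y, z)) \<longleftrightarrow> \<not> (y = 0 \<and> z = 0) \<and> \<not> (x = 0 \<and> z = 0)"
| "valid_pt (OnE1 (a, b)) \<longleftrightarrow> (a, b) \<noteq> (0, 0)"
| "valid_pt (OnE2 (a, b)) \<longleftrightarrow> (a, b) \<noteq> (0, 0)"

text \<open>Nonzero sections of d L_2 = d(3H - E1 - E2): nonzero forms of degree 3d with
multiplicity at least d at P1 and P2; the divisor is D = f^*C - d E1 - d E2.\<close>
definition section_dL :: "nat \<Rightarrow> poly3 \<Rightarrow> bool" where
  "section_dL d F \<longleftrightarrow> homog_poly (3 * d) F \<and> (\<exists>a b c. F a b c \<noteq> 0)
     \<and> mult3_ge (3 * d) F (1, 0, 0) d \<and> mult3_ge (3 * d) F (0, 1, 0) d"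

text \<open>mult_ge d F q m: the divisor D = f^*C - dE1 - dE2 of the section F of dL_2 has
multiplicity at least m at q.  At a point of E_i this means mult_q(f^*C) \<ge> m + d,
computed in the standard affine charts of the blow-up (u, t) \<mapsto> (u, u t) resp.
(v, s) \<mapsto> (v s, v).\<close>
fun mult_ge :: "nat \<Rightarrow> poly3 \<Rightarrow> S2pt \<Rightarrow> nat \<Rightarrow> bool" where
  "mult_ge d F (Off p) m = mult3_ge (3 * d) F p m"
| "mult_ge d F (OnE1 (a, b)) m =
     (if a \<noteq> 0 then
        mult2_ge (3 * d) (\<lambda>i j. if j \<le> i \<and> i \<le> 3 * d then F (3 * d - i) (i - j) j else 0) (0, b / a) (m + d)
      else
        mult2_ge (3 * d) (\<lambda>i j. if j \<le> i \<and> i \<le> 3 * d then F (3 * d - i) j (i - j) else 0) (0, 0) (m + d))"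
| "mult_ge d F (OnE2 (a, b)) m =
     (if a \<noteq> 0 then
        mult2_ge (3 * d) (\<lambda>i j. if j \<le> i \<and> i \<le> 3 * d then F (i - j) (3 * d - i) j else 0) (0, b / a) (m + d)
      else
        mult2_ge (3 * d) (\<lambda>i j. if j \<le> i \<and> i \<le> 3 * d then F j (3 * d - i) (i - j) else 0) (0, 0) (m + d))"

definition alpha :: "nat \<Rightarrow> S2pt set \<Rightarrow> nat" where
  "alpha m Z = (LEAST d. \<exists>F. section_dL d F \<and> (\<forall>q\<in>Z. mult_ge d F q m))"

end

theory Submission
  imports Defs
begin

text \<open>
  For a point \<open>q\<close> let \<open>L\<^sub>q\<close> be a linear form vanishing at \<open>q\<close> (the line through \<open>q\<close>
  and \<open>P2\<close>, or the line \<open>z = 0\<close> through \<open>P1\<close>, \<open>P2\<close> if \<open>q\<close> lies on \<open>E1 \<union> E2\<close>). The cubic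
  \<open>x y L\<^sub>q\<close> passes through \<open>P1\<close> and \<open>P2\<close>, so it is a section of \<open>L\<^sub>2\<close> vanishing at \<open>q\<close>, and
  products of such cubics show that \<open>\<alpha>\<close> is well defined.

  Let \<open>d = \<alpha>((m+5)Z)\<close> and let the form \<open>F\<close> of degree \<open>3d\<close> define \<open>D \<in> |d L\<^sub>2|\<close> of multiplicity
  \<open>m + 5\<close> along \<open>Z\<close>. A nonzero section of \<open>d L\<^sub>2\<close> has multiplicity at most \<open>5d\<close> everywhere,
  so \<open>d \<ge> 2\<close>. Now apply \<open>z\<^sup>k \<partial>\<^sub>x\<^sup>a \<partial>\<^sub>y\<^sup>b \<partial>\<^sub>z\<^sup>c\<close> with \<open>a + b + c = k + 3\<close> to \<open>F\<close>. Off the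
  exceptional curves every derivative lowers the multiplicity by at most one. In the charts of the
  blow-up, \<open>\<partial>\<^sub>x\<close> does not lower the multiplicity of the pullback at points of \<open>E1\<close>, nor \<open>\<partial>\<^sub>y\<close>
  at points of \<open>E2\<close>; the other derivatives lower it by at most two, multiplication by \<open>z\<close> raises it
  by one, and passing from \<open>d\<close> to \<open>d - 1\<close> adds one to the multiplicity of the divisor there. With
  \<open>(a, b, c, k)\<close> equal to \<open>(2, 2, 0, 1)\<close> if some monomial of \<open>F\<close> is divisible by \<open>x\<^sup>2 y\<^sup>2\<close>, and
  otherwise to \<open>(0, 3, 0, 0)\<close>, \<open>(3, 0, 0, 0)\<close> or \<open>(0, 0, 3, 0)\<close>, the result is a nonzero section of
  \<open>(d - 1) L\<^sub>2\<close> of multiplicity at least \<open>m\<close> along \<open>Z\<close>; hence \<open>\<alpha>(mZ) \<le> d - 1\<close>.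
\<close>

section \<open>Taylor coefficients in one variable\<close>

definition taylor1 :: "nat \<Rightarrow> (nat \<Rightarrow> complex) \<Rightarrow> complex \<Rightarrow> nat \<Rightarrow> complex" where
  "taylor1 N g x i = (\<Sum>a = 0..N. g a * of_nat (a choose i) * x ^ (a - i))"

lemma taylor1_lincomb:
  "taylor1 N (\<lambda>a. \<alpha> * f a + \<beta> * g a + \<gamma> * h a) x i =
    \<alpha> * taylor1 N f x i + \<beta> * taylor1 N g x i + \<gamma> * taylor1 N h x i"
  by (simp add: taylor1_def sum.distrib sum_distrib_left algebra_simps)

lemma taylor1_scale: "taylor1 N (\<lambda>a. c * g a) x i = c * taylor1 N g x i"
  by (simp add: taylor1_def sum_distrib_left mult_ac)

lemma taylor1_diff: "taylor1 N (\<lambda>a. f a - g a) x i = taylor1 N f x i - taylor1 N g x i"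
  by (simp add: taylor1_def sum_subtractf algebra_simps)

lemma taylor1_0 [simp]: "taylor1 N (\<lambda>a. 0) x i = 0"
  by (simp add: taylor1_def)

lemma taylor1_if:
  "taylor1 N (\<lambda>a. if P then f a else g a) x i = (if P then taylor1 N f x i else taylor1 N g x i)"
  by (simp add: taylor1_def)

lemma taylor1_cong: "(\<And>a. a \<le> N \<Longrightarrow> f a = g a) \<Longrightarrow> taylor1 N f x i = taylor1 N g x i"
  by (simp add: taylor1_def)

lemma taylor1_eq_0: "(\<And>a. i \<le> a \<Longrightarrow> a \<le> N \<Longrightarrow> g a = 0) \<Longrightarrow> taylor1 N g x i = 0"
  unfolding taylor1_def by (rule sum.neutral) (auto simp: binomial_eq_0 not_le)

lemma taylor1_truncate:
  assumes "\<And>a. n < a \<Longrightarrow> a \<le> N \<Longrightarrow> g a = 0" and "n \<le> N"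
  shows "taylor1 N g x i = taylor1 n g x i"
  unfolding taylor1_def by (rule sum.mono_neutral_right) (use assms in auto)

lemma taylor1_leading:
  assumes "\<And>a. i < a \<Longrightarrow> a \<le> N \<Longrightarrow> g a = 0" and "i \<le> N"
  shows "taylor1 N g x i = g i"
proof -
  have "taylor1 N g x i = taylor1 i g x i"
    by (rule taylor1_truncate) (use assms in auto)
  also have "\<dots> = (\<Sum>a = 0..i. if a = i then g i else 0)"
    unfolding taylor1_def by (rule sum.cong) (auto simp: binomial_eq_0)
  finally show ?thesis by simp
qed

lemma taylor1_at_0: "taylor1 N g 0 j = (if j \<le> N then g j else 0)"
proof -
  have "taylor1 N g 0 j = (\<Sum>a = 0..N. if a = j then g j else 0)"
    unfolding taylor1_def by (rule sum.cong) (auto simp: binomial_eq_0)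
  then show ?thesis by simp
qed

lemma taylor1_deriv:
  "taylor1 N (\<lambda>a. of_nat (Suc a) * g (Suc a)) x i = of_nat (Suc i) * taylor1 (Suc N) g x (Suc i)"
proof -
  have binom: "of_nat (Suc i) * of_nat (Suc a choose Suc i) =
      (of_nat (Suc a) * of_nat (a choose i) :: complex)" for a
    by (metis Suc_times_binomial_eq mult.commute of_nat_mult)
  have "of_nat (Suc i) * taylor1 (Suc N) g x (Suc i) =
      (\<Sum>a = 0..N. g (Suc a) * (of_nat (Suc i) * of_nat (Suc a choose Suc i)) * x ^ (a - i))"
    unfolding taylor1_def
    by (subst sum.atLeast0_atMost_Suc_shift)
      (simp add: sum_distrib_left mult_ac del: of_nat_Suc binomial_Suc_Suc)
  also have "\<dots> = taylor1 N (\<lambda>a. of_nat (Suc a) * g (Suc a)) x i"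
    unfolding binom taylor1_def by (simp add: mult_ac del: of_nat_Suc)
  finally show ?thesis ..
qed

lemma taylor1_mult_X:
  "taylor1 (Suc N) (\<lambda>a. if a = 0 then 0 else g (a - 1)) x i =
     x * taylor1 N g x i + (if i = 0 then 0 else taylor1 N g x (i - 1))"
proof -
  have step: "of_nat (Suc a choose i) * x ^ (Suc a - i) =
      x * (of_nat (a choose i) * x ^ (a - i)) +
      (if i = 0 then 0 else of_nat (a choose (i - 1)) * x ^ (a - (i - 1)))"
    for a
  proof (cases i)
    case (Suc i')
    show ?thesis
    proof (cases "a \<le> i'")
      case True
      then show ?thesis using Suc by (cases "a = i'") (auto simp: binomial_eq_0)
    next
      case False
      then have "Suc a - Suc i' = Suc (a - Suc i')" "a - i' = Suc (a - Suc i')" by auto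
      then show ?thesis using Suc by (simp add: algebra_simps)
    qed
  qed simp
  have "taylor1 (Suc N) (\<lambda>a. if a = 0 then 0 else g (a - 1)) x i =
      (\<Sum>a = 0..N. g a * (of_nat (Suc a choose i) * x ^ (Suc a - i)))"
    unfolding taylor1_def by (subst sum.atLeast0_atMost_Suc_shift) (simp add: mult_ac del: binomial_Suc_Suc)
  also have "\<dots> = x * taylor1 N g x i + (if i = 0 then 0 else taylor1 N g x (i - 1))"
    unfolding step taylor1_def by (simp add: sum.distrib sum_distrib_left algebra_simps)
  finally show ?thesis .
qed

lemma taylor1_Euler_operator:
  "taylor1 N (\<lambda>b. of_nat b * g b) t j =
    of_nat j * taylor1 N g t j + of_nat (Suc j) * t * taylor1 N g t (Suc j)"
proof -
  have key: "of_nat b * of_nat (b choose j) * t ^ (b - j) =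
      of_nat j * (of_nat (b choose j) * t ^ (b - j)) +
      of_nat (Suc j) * t * (of_nat (b choose Suc j) * t ^ (b - Suc j))"
    for b
  proof (cases "b \<le> j")
    case True
    then show ?thesis by (cases "b = j") (auto simp: binomial_eq_0)
  next
    case False
    have "b * (b choose j) = j * (b choose j) + (b - j) * (b choose j)"
      using False by (simp add: diff_mult_distrib)
    also have "(b - j) * (b choose j) = Suc j * (b choose Suc j)"
      by (simp only: binomial_absorption binomial_absorb_comp)
    finally have "of_nat b * of_nat (b choose j) =
        (of_nat j * of_nat (b choose j) + of_nat (Suc j) * of_nat (b choose Suc j) :: complex)"
      by (metis of_nat_add of_nat_mult)
    moreover have "b - j = Suc (b - Suc j)" using False by simp
    ultimately show ?thesis by (simp add: algebra_simps)
  qed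
  have "taylor1 N (\<lambda>b. of_nat b * g b) t j =
      (\<Sum>b = 0..N. g b * (of_nat b * of_nat (b choose j) * t ^ (b - j)))"
    unfolding taylor1_def by (simp add: mult_ac)
  also have "\<dots> = of_nat j * taylor1 N g t j + of_nat (Suc j) * t * taylor1 N g t (Suc j)"
    unfolding key taylor1_def by (simp add: sum.distrib sum_distrib_left algebra_simps del: of_nat_Suc)
  finally show ?thesis .
qed

lemma taylor1_all_zero:
  assumes "\<And>j. taylor1 N g t j = 0" and "b \<le> N"
  shows "g b = 0"
  using assms(2)
proof (induction "N - b" arbitrary: b rule: less_induct)
  case less
  have "taylor1 N g t b = g b"
    by (rule taylor1_leading) (use less in auto)
  with assms(1) show ?case by simp
qed

section \<open>Derivatives and products of ternary forms\<close>

definition dx :: "poly3 \<Rightarrow> poly3" where "dx F = (\<lambda>a b c. of_nat (Suc a) * F (Suc a) b c)"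
definition dy :: "poly3 \<Rightarrow> poly3" where "dy F = (\<lambda>a b c. of_nat (Suc b) * F a (Suc b) c)"
definition dz :: "poly3 \<Rightarrow> poly3" where "dz F = (\<lambda>a b c. of_nat (Suc c) * F a b (Suc c))"

definition xmul :: "poly3 \<Rightarrow> poly3" where "xmul F = (\<lambda>a b c. if a = 0 then 0 else F (a - 1) b c)"
definition ymul :: "poly3 \<Rightarrow> poly3" where "ymul F = (\<lambda>a b c. if b = 0 then 0 else F a (b - 1) c)"
definition zmul :: "poly3 \<Rightarrow> poly3" where "zmul F = (\<lambda>a b c. if c = 0 then 0 else F a b (c - 1))"

definition linmul :: "complex \<Rightarrow> complex \<Rightarrow> complex \<Rightarrow> poly3 \<Rightarrow> poly3" where
  "linmul \<alpha> \<beta> \<gamma> F = (\<lambda>a b c. \<alpha> * xmul F a b c + \<beta> * ymul F a b c + \<gamma> * zmul F a b c)"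

definition swap_xy :: "poly3 \<Rightarrow> poly3" where "swap_xy F = (\<lambda>a b c. F b a c)"
definition swap_yz :: "poly3 \<Rightarrow> poly3" where "swap_yz F = (\<lambda>a b c. F a c b)"

lemmas poly3_op_defs = dx_def dy_def dz_def xmul_def ymul_def zmul_def linmul_def swap_xy_def swap_yz_def

lemma swap_xy_commute [simp]:
  "swap_xy (swap_xy F) = F"
  "swap_xy (dx F) = dy (swap_xy F)" "swap_xy (dy F) = dx (swap_xy F)"
  "swap_xy (dz F) = dz (swap_xy F)"
  "swap_xy (xmul F) = ymul (swap_xy F)" "swap_xy (ymul F) = xmul (swap_xy F)"
  "swap_xy (zmul F) = zmul (swap_xy F)"
  "swap_xy (linmul \<alpha> \<beta> \<gamma> F) = linmul \<beta> \<alpha> \<gamma> (swap_xy F)"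
  by (simp_all add: fun_eq_iff poly3_op_defs algebra_simps)

lemma swap_yz_commute [simp]:
  "swap_yz (swap_yz F) = F"
  "swap_yz (dx F) = dx (swap_yz F)" "swap_yz (dy F) = dz (swap_yz F)"
  "swap_yz (dz F) = dy (swap_yz F)"
  "swap_yz (xmul F) = xmul (swap_yz F)" "swap_yz (ymul F) = zmul (swap_yz F)"
  "swap_yz (zmul F) = ymul (swap_yz F)"
  "swap_yz (linmul \<alpha> \<beta> \<gamma> F) = linmul \<alpha> \<gamma> \<beta> (swap_yz F)"
  by (simp_all add: fun_eq_iff poly3_op_defs algebra_simps)

lemma homog_polyD: "homog_poly n F \<Longrightarrow> F a b c \<noteq> 0 \<Longrightarrow> a + b + c = n"
  by (simp add: homog_poly_def)

lemma homog_poly_eq_0: "homog_poly n F \<Longrightarrow> a + b + c \<noteq> n \<Longrightarrow> F a b c = 0"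
  by (auto simp: homog_poly_def)

lemma homog_poly_deriv:
  assumes "homog_poly (Suc n) F"
  shows "homog_poly n (dx F)" and "homog_poly n (dy F)" and "homog_poly n (dz F)"
  unfolding homog_poly_def poly3_op_defs by (auto dest!: homog_polyD[OF assms])

lemma homog_poly_mul:
  assumes "homog_poly n F"
  shows "homog_poly (Suc n) (xmul F)" and "homog_poly (Suc n) (ymul F)" and "homog_poly (Suc n) (zmul F)"
  unfolding homog_poly_def poly3_op_defs by (auto split: if_splits dest!: homog_polyD[OF assms])

lemma homog_poly_swap_xy: "homog_poly n F \<Longrightarrow> homog_poly n (swap_xy F)"
  and homog_poly_swap_yz: "homog_poly n F \<Longrightarrow> homog_poly n (swap_yz F)"
  unfolding homog_poly_def swap_xy_def swap_yz_def by (metis add.commute add.left_commute)+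

lemma homog_poly_linmul: "homog_poly n F \<Longrightarrow> homog_poly (Suc n) (linmul \<alpha> \<beta> \<gamma> F)"
proof -
  assume "homog_poly n F"
  then have "homog_poly (Suc n) (xmul F)" "homog_poly (Suc n) (ymul F)" "homog_poly (Suc n) (zmul F)"
    by (simp_all add: homog_poly_mul)
  then show ?thesis unfolding homog_poly_def linmul_def by (metis mult_zero_right add_0)
qed

section \<open>Multiplicity at points of the plane\<close>

lemma taylor3_nested:
  "taylor3 N F (x, y, z) i j k = taylor1 N (\<lambda>a. taylor1 N (\<lambda>b. taylor1 N (\<lambda>c. F a b c) z k) y j) x i"
  by (simp add: taylor3_def taylor1_def sum_distrib_left sum_distrib_right mult_ac)

lemma taylor3_swap_xy: "taylor3 N (swap_xy F) (y, x, z) i j k = taylor3 N F (x, y, z) j i k"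
  unfolding taylor3_def swap_xy_def by (subst sum.swap) (simp add: mult_ac)

lemma taylor3_swap_yz: "taylor3 N (swap_yz F) (x, z, y) i j k = taylor3 N F (x, y, z) i k j"
  unfolding taylor3_def swap_yz_def by (rule sum.cong[OF refl], subst sum.swap) (simp add: mult_ac)

lemma taylor3_truncate:
  assumes "homog_poly n F" and "n \<le> N"
  shows "taylor3 N F p i j k = taylor3 n F p i j k"
proof -
  have F0: "F a b c = 0" if "n < a \<or> n < b \<or> n < c" for a b c
    using homog_polyD[OF assms(1), of a b c] that by fastforce
  obtain x y z where p: "p = (x, y, z)" by (cases p) auto
  have inner: "taylor1 N (\<lambda>c. F a b c) z k = taylor1 n (\<lambda>c. F a b c) z k" for a b
    by (rule taylor1_truncate) (use assms(2) in \<open>auto simp: F0\<close>)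
  have middle: "taylor1 N (\<lambda>b. taylor1 n (\<lambda>c. F a b c) z k) y j =
      taylor1 n (\<lambda>b. taylor1 n (\<lambda>c. F a b c) z k) y j" for a
    by (rule taylor1_truncate) (use assms(2) in \<open>auto intro!: taylor1_eq_0 simp: F0\<close>)
  have outer: "taylor1 N (\<lambda>a. taylor1 n (\<lambda>b. taylor1 n (\<lambda>c. F a b c) z k) y j) x i =
      taylor1 n (\<lambda>a. taylor1 n (\<lambda>b. taylor1 n (\<lambda>c. F a b c) z k) y j) x i"
    by (rule taylor1_truncate) (use assms(2) in \<open>auto intro!: taylor1_eq_0 simp: F0\<close>)
  show ?thesis unfolding p taylor3_nested inner middle outer ..
qed

lemma taylor3_dx:
  assumes "homog_poly n F" and "n \<le> N"
  shows "taylor3 N (dx F) (x, y, z) i j k = of_nat (Suc i) * taylor3 N F (x, y, z) (Suc i) j k"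
proof -
  define G where "G a = taylor1 N (\<lambda>b. taylor1 N (\<lambda>c. F a b c) z k) y j" for a
  have "taylor3 N (dx F) (x, y, z) i j k = taylor1 N (\<lambda>a. of_nat (Suc a) * G (Suc a)) x i"
    unfolding taylor3_nested G_def dx_def by (simp add: taylor1_scale)
  also have "\<dots> = of_nat (Suc i) * taylor1 (Suc N) G x (Suc i)"
    by (rule taylor1_deriv)
  also have "taylor1 (Suc N) G x (Suc i) = taylor1 N G x (Suc i)"
    using assms(2)
    by (intro taylor1_truncate) (auto intro!: taylor1_eq_0 homog_poly_eq_0[OF assms(1)] simp: G_def)
  finally show ?thesis unfolding taylor3_nested G_def .
qed

lemma taylor3_xmul:
  assumes "homog_poly n F" and "n < N"
  shows "taylor3 N (xmul F) (x, y, z) i j k =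
    x * taylor3 N F (x, y, z) i j k + (if i = 0 then 0 else taylor3 N F (x, y, z) (i - 1) j k)"
proof -
  define G where "G a = taylor1 N (\<lambda>b. taylor1 N (\<lambda>c. F a b c) z k) y j" for a
  obtain N' where N': "N = Suc N'" using assms(2) by (cases N) auto
  have G_truncate: "taylor1 N' G x i' = taylor1 N G x i'" for i'
    using assms(2) unfolding N'
    by (intro taylor1_truncate[symmetric]) (auto intro!: taylor1_eq_0 homog_poly_eq_0[OF assms(1)] simp: G_def)
  have "taylor3 N (xmul F) (x, y, z) i j k = taylor1 (Suc N') (\<lambda>a. if a = 0 then 0 else G (a - 1)) x i"
    unfolding taylor3_nested G_def xmul_def N' by (simp add: taylor1_if cong: if_cong)
  also have "\<dots> = x * taylor1 N G x i + (if i = 0 then 0 else taylor1 N G x (i - 1))"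
    unfolding taylor1_mult_X G_truncate ..
  finally show ?thesis unfolding taylor3_nested G_def .
qed

lemma taylor3_dy:
  assumes "homog_poly n F" and "n \<le> N"
  shows "taylor3 N (dy F) (x, y, z) i j k = of_nat (Suc j) * taylor3 N F (x, y, z) i (Suc j) k"
  using taylor3_swap_xy[of N "dy F" y x z j i k]
    taylor3_dx[OF homog_poly_swap_xy[OF assms(1)] assms(2), of y x z j i k]
  by (simp add: taylor3_swap_xy)

lemma taylor3_dz:
  assumes "homog_poly n F" and "n \<le> N"
  shows "taylor3 N (dz F) (x, y, z) i j k = of_nat (Suc k) * taylor3 N F (x, y, z) i j (Suc k)"
  using taylor3_swap_yz[of N "dz F" x z y i k j]
    taylor3_dy[OF homog_poly_swap_yz[OF assms(1)] assms(2), of x z y i k j]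
  by (simp add: taylor3_swap_yz)

lemma taylor3_ymul:
  assumes "homog_poly n F" and "n < N"
  shows "taylor3 N (ymul F) (x, y, z) i j k =
    y * taylor3 N F (x, y, z) i j k + (if j = 0 then 0 else taylor3 N F (x, y, z) i (j - 1) k)"
proof -
  have "taylor3 N (ymul F) (x, y, z) i j k = taylor3 N (xmul (swap_xy F)) (y, x, z) j i k"
    using taylor3_swap_xy[of N "ymul F" y x z j i k] by simp
  also have "\<dots> = y * taylor3 N (swap_xy F) (y, x, z) j i k +
      (if j = 0 then 0 else taylor3 N (swap_xy F) (y, x, z) (j - 1) i k)"
    by (rule taylor3_xmul[OF homog_poly_swap_xy[OF assms(1)] assms(2)])
  finally show ?thesis by (simp only: taylor3_swap_xy)
qed

lemma taylor3_zmul: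
  assumes "homog_poly n F" and "n < N"
  shows "taylor3 N (zmul F) (x, y, z) i j k =
    z * taylor3 N F (x, y, z) i j k + (if k = 0 then 0 else taylor3 N F (x, y, z) i j (k - 1))"
proof -
  have "taylor3 N (zmul F) (x, y, z) i j k = taylor3 N (ymul (swap_yz F)) (x, z, y) i k j"
    using taylor3_swap_yz[of N "zmul F" x z y i k j] by simp
  also have "\<dots> = z * taylor3 N (swap_yz F) (x, z, y) i k j +
      (if k = 0 then 0 else taylor3 N (swap_yz F) (x, z, y) i (k - 1) j)"
    by (rule taylor3_ymul[OF homog_poly_swap_yz[OF assms(1)] assms(2)])
  finally show ?thesis by (simp only: taylor3_swap_yz)
qed

lemma taylor3_lincomb:
  "taylor3 N (\<lambda>a b c. \<alpha> * F a b c + \<beta> * G a b c + \<gamma> * H a b c) p i j k =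
    \<alpha> * taylor3 N F p i j k + \<beta> * taylor3 N G p i j k + \<gamma> * taylor3 N H p i j k"
  by (simp add: taylor3_def sum.distrib sum_distrib_left algebra_simps)

lemma taylor3_leading:
  assumes "homog_poly n F" and "a + b + c = n"
  shows "taylor3 n F (x, y, z) a b c = F a b c"
proof -
  have F0: "F a' b' c' = 0" if "a \<le> a'" "b \<le> b'" "c \<le> c'" "(a', b', c') \<noteq> (a, b, c)" for a' b' c'
    using that assms by (intro homog_poly_eq_0[OF assms(1)]) auto
  have "taylor1 n (\<lambda>c'. F a b c') z c = F a b c"
    using assms(2) by (intro taylor1_leading) (auto simp: F0)
  moreover have "taylor1 n (\<lambda>b'. taylor1 n (\<lambda>c'. F a b' c') z c) y b = taylor1 n (\<lambda>c'. F a b c') z c"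
    using assms(2) by (intro taylor1_leading) (auto intro!: taylor1_eq_0 simp: F0)
  moreover have "taylor3 n F (x, y, z) a b c = taylor1 n (\<lambda>b'. taylor1 n (\<lambda>c'. F a b' c') z c) y b"
    unfolding taylor3_nested using assms(2) by (intro taylor1_leading) (auto intro!: taylor1_eq_0 simp: F0)
  ultimately show ?thesis by simp
qed

lemma mult3_ge_mono: "mult3_ge n F p M \<Longrightarrow> M' \<le> M \<Longrightarrow> mult3_ge n F p M'"
  by (auto simp: mult3_ge_def)

lemma mult3_ge_truncate:
  assumes "homog_poly n F" and "n \<le> N"
  shows "mult3_ge N F p M \<longleftrightarrow> mult3_ge n F p M"
  using taylor3_truncate[OF assms] by (simp add: mult3_ge_def)

lemma mult3_ge_swap_xy: "mult3_ge n (swap_xy F) (y, x, z) M \<longleftrightarrow> mult3_ge n F (x, y, z) M"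
  unfolding mult3_ge_def taylor3_swap_xy by (metis add.commute add.left_commute)

lemma mult3_ge_le_degree:
  assumes "homog_poly n F" and "F a b c \<noteq> 0" and "mult3_ge n F (x, y, z) M"
  shows "M \<le> n"
proof (rule ccontr)
  assume "\<not> M \<le> n"
  then have "taylor3 n F (x, y, z) a b c = 0"
    using assms(3) homog_polyD[OF assms(1,2)] by (simp add: mult3_ge_def)
  with assms(2) show False
    by (simp add: taylor3_leading[OF assms(1) homog_polyD[OF assms(1,2)]])
qed

lemma mult3_ge_deriv:
  assumes h: "homog_poly (Suc n) F" and M: "mult3_ge (Suc n) F p M"
  shows "mult3_ge n (dx F) p (M - 1)" and "mult3_ge n (dy F) p (M - 1)" and "mult3_ge n (dz F) p (M - 1)"
proof -
  obtain x y z where p: "p = (x, y, z)" by (cases p) auto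
  have M': "taylor3 (Suc n) F p i j k = 0" if "i + j + k < M" for i j k
    using M that by (simp add: mult3_ge_def)
  have "mult3_ge (Suc n) (dx F) p (M - 1)" "mult3_ge (Suc n) (dy F) p (M - 1)"
    "mult3_ge (Suc n) (dz F) p (M - 1)"
    unfolding mult3_ge_def p
      taylor3_dx[OF h order.refl] taylor3_dy[OF h order.refl] taylor3_dz[OF h order.refl]
    by (auto intro!: M'[unfolded p])
  then show "mult3_ge n (dx F) p (M - 1)" and "mult3_ge n (dy F) p (M - 1)"
    and "mult3_ge n (dz F) p (M - 1)"
    using mult3_ge_truncate[OF homog_poly_deriv(1)[OF h], of "Suc n"]
      mult3_ge_truncate[OF homog_poly_deriv(2)[OF h], of "Suc n"]
      mult3_ge_truncate[OF homog_poly_deriv(3)[OF h], of "Suc n"]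
    by simp_all
qed

lemma mult3_ge_linmul:
  assumes h: "homog_poly n F" and M: "mult3_ge n F (x, y, z) M"
  shows "mult3_ge (Suc n) (linmul \<alpha> \<beta> \<gamma> F) (x, y, z) (if \<alpha> * x + \<beta> * y + \<gamma> * z = 0 then Suc M else M)"
  unfolding mult3_ge_def
proof (intro allI impI)
  fix i j k
  assume ijk: "i + j + k < (if \<alpha> * x + \<beta> * y + \<gamma> * z = 0 then Suc M else M)"
  let ?T = "taylor3 n F (x, y, z)"
  have M': "?T i' j' k' = 0" if "i' + j' + k' < M" for i' j' k'
    using M that by (simp add: mult3_ge_def)
  have "taylor3 (Suc n) (linmul \<alpha> \<beta> \<gamma> F) (x, y, z) i j k =
      (\<alpha> * x + \<beta> * y + \<gamma> * z) * ?T i j k + \<alpha> * (if i = 0 then 0 else ?T (i - 1) j k)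
      + \<beta> * (if j = 0 then 0 else ?T i (j - 1) k) + \<gamma> * (if k = 0 then 0 else ?T i j (k - 1))"
    unfolding linmul_def taylor3_lincomb taylor3_xmul[OF h lessI] taylor3_ymul[OF h lessI]
      taylor3_zmul[OF h lessI] taylor3_truncate[OF h le_SucI[OF order.refl]]
    by (simp add: algebra_simps)
  also have "\<dots> = 0"
  proof -
    have "(\<alpha> * x + \<beta> * y + \<gamma> * z) * ?T i j k = 0"
      using ijk by (auto intro!: M' split: if_splits)
    moreover have "(if i = 0 then 0 else ?T (i - 1) j k) = 0" "(if j = 0 then 0 else ?T i (j - 1) k) = 0"
      "(if k = 0 then 0 else ?T i j (k - 1)) = 0"
      using ijk by (auto intro!: M' split: if_splits)
    ultimately show ?thesis by simp
  qed
  finally show "taylor3 (Suc n) (linmul \<alpha> \<beta> \<gamma> F) (x, y, z) i j k = 0" .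
qed

lemma mult3_ge_P1_iff:
  assumes h: "homog_poly n F"
  shows "mult3_ge n F (1, 0, 0) M \<longleftrightarrow> (\<forall>a b c. F a b c \<noteq> 0 \<longrightarrow> M \<le> b + c)"
proof -
  have T: "taylor3 n F (1, 0, 0) i j k =
      (if j \<le> n \<and> k \<le> n then taylor1 n (\<lambda>a. F a j k) 1 i else 0)" for i j k
    by (simp add: taylor3_nested taylor1_at_0 taylor1_if del: One_nat_def)
  show ?thesis
  proof
    assume M: "mult3_ge n F (1, 0, 0) M"
    show "\<forall>a b c. F a b c \<noteq> 0 \<longrightarrow> M \<le> b + c"
    proof (intro allI impI, rule ccontr)
      fix a b c
      assume F: "F a b c \<noteq> 0" and "\<not> M \<le> b + c"
      then have "taylor3 n F (1, 0, 0) 0 b c = 0" using M by (simp add: mult3_ge_def)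
      moreover have "taylor1 n (\<lambda>a'. F a' b c) 1 0 = (\<Sum>a' = 0..n. if a' = a then F a b c else 0)"
        unfolding taylor1_def using homog_polyD[OF h F]
        by (intro sum.cong) (auto intro: homog_poly_eq_0[OF h])
      moreover have "a \<le> n" using homog_polyD[OF h F] by simp
      ultimately show False using F homog_polyD[OF h F] by (auto simp: T)
    qed
  next
    assume "\<forall>a b c. F a b c \<noteq> 0 \<longrightarrow> M \<le> b + c"
    then have "F a j k = 0" if "j + k < M" for a j k
      using that by (meson not_le)
    then show "mult3_ge n F (1, 0, 0) M"
      by (auto simp: mult3_ge_def T intro!: taylor1_eq_0)
  qed
qed

lemma mult3_ge_P2_iff:
  assumes "homog_poly n F"
  shows "mult3_ge n F (0, 1, 0) M \<longleftrightarrow> (\<forall>a b c. F a b c \<noteq> 0 \<longrightarrow> M \<le> a + c)"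
proof -
  have "mult3_ge n F (0, 1, 0) M \<longleftrightarrow> mult3_ge n (swap_xy F) (1, 0, 0) M"
    using mult3_ge_swap_xy[of n "swap_xy F" 0 1 0 M] by simp
  also have "\<dots> \<longleftrightarrow> (\<forall>a b c. F b a c \<noteq> 0 \<longrightarrow> M \<le> b + c)"
    unfolding mult3_ge_P1_iff[OF homog_poly_swap_xy[OF assms]] by (simp add: swap_xy_def)
  also have "\<dots> \<longleftrightarrow> (\<forall>a b c. F a b c \<noteq> 0 \<longrightarrow> M \<le> a + c)"
    by blast
  finally show ?thesis .
qed

section \<open>Multiplicity on the blow-up\<close>

text \<open>\<open>chart n F i j\<close> is the coefficient of \<open>u\<^sup>i t\<^sup>j\<close> in \<open>F(1, u, u t)\<close>, the pullback of \<open>F\<close>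
  to the chart \<open>(u, t) \<mapsto> [1 : u : u t]\<close> of the blow-up at \<open>P1\<close>, as in \<open>mult_ge\<close>.\<close>
definition chart :: "nat \<Rightarrow> poly3 \<Rightarrow> nat \<Rightarrow> nat \<Rightarrow> complex" where
  "chart n F i j = (if j \<le> i \<and> i \<le> n then F (n - i) (i - j) j else 0)"

text \<open>Multiplicity at \<open>(0, t)\<close> of \<open>\<Sum> h i j u\<^sup>i t\<^sup>j\<close>; truncating the \<open>t\<close>-degree at \<open>i\<close> is only
  correct because all the \<open>h\<close> below (charts) vanish for \<open>j > i\<close>.\<close>
definition chart_mult_ge :: "complex \<Rightarrow> (nat \<Rightarrow> nat \<Rightarrow> complex) \<Rightarrow> nat \<Rightarrow> bool" where
  "chart_mult_ge t h M \<longleftrightarrow> (\<forall>i j. i + j < M \<longrightarrow> taylor1 i (h i) t j = 0)"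

lemma chart_mult_ge_mono: "chart_mult_ge t h M \<Longrightarrow> M' \<le> M \<Longrightarrow> chart_mult_ge t h M'"
  by (auto simp: chart_mult_ge_def)

text \<open>On the chart \<open>x\<close>, \<open>y\<close>, \<open>z\<close> restrict to \<open>1\<close>, \<open>u\<close>, \<open>u t\<close>, and by the chain rule and Euler's
  formula \<open>\<partial>\<^sub>x\<close>, \<open>\<partial>\<^sub>y\<close>, \<open>\<partial>\<^sub>z\<close> act on forms of degree \<open>n + 1\<close> as \<open>n + 1 - u \<partial>\<^sub>u\<close>,
  \<open>\<partial>\<^sub>u - (t/u) \<partial>\<^sub>t\<close> and \<open>u\<^sup>-\<^sup>1 \<partial>\<^sub>t\<close>; this gives the losses \<open>0, 2, 2\<close> and the gains \<open>0, 1, 1\<close>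
  in the six lemmas below.\<close>

lemma chart_mult_ge_dx:
  assumes "chart_mult_ge t (chart (Suc n) F) M"
  shows "chart_mult_ge t (chart n (dx F)) M"
proof -
  have "chart n (dx F) = (\<lambda>i j. of_nat (Suc n - i) * chart (Suc n) F i j)"
    by (auto simp: fun_eq_iff chart_def dx_def Suc_diff_le)
  with assms show ?thesis
    by (simp add: chart_mult_ge_def taylor1_scale)
qed

lemma chart_mult_ge_dy:
  assumes M: "chart_mult_ge t (chart (Suc n) F) M"
  shows "chart_mult_ge t (chart n (dy F)) (M - 2)"
  unfolding chart_mult_ge_def
proof (intro allI impI)
  fix i j
  assume ij: "i + j < M - 2"
  let ?h = "chart (Suc n) F (Suc i)"
  have "chart n (dy F) i = (\<lambda>j'. of_nat (Suc i - j') * ?h j')"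
    by (auto simp: fun_eq_iff chart_def dy_def Suc_diff_le)
  then have "taylor1 i (chart n (dy F) i) t j = taylor1 (Suc i) (\<lambda>j'. of_nat (Suc i - j') * ?h j') t j"
    by (simp add: taylor1_truncate[of i "Suc i"])
  also have "\<dots> = taylor1 (Suc i) (\<lambda>j'. of_nat (Suc i) * ?h j' - of_nat j' * ?h j') t j"
    by (rule taylor1_cong) (simp add: of_nat_diff algebra_simps)
  also have "\<dots> = of_nat (Suc i) * taylor1 (Suc i) ?h t j -
      (of_nat j * taylor1 (Suc i) ?h t j + of_nat (Suc j) * t * taylor1 (Suc i) ?h t (Suc j))"
    unfolding taylor1_diff taylor1_scale taylor1_Euler_operator ..
  also have "\<dots> = 0"
    using M ij by (simp add: chart_mult_ge_def)
  finally show "taylor1 i (chart n (dy F) i) t j = 0" .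
qed

lemma chart_mult_ge_dz:
  assumes "chart_mult_ge t (chart (Suc n) F) M"
  shows "chart_mult_ge t (chart n (dz F)) (M - 2)"
proof -
  have "chart n (dz F) = (\<lambda>i j. of_nat (Suc j) * chart (Suc n) F (Suc i) (Suc j))"
    by (auto simp: fun_eq_iff chart_def dz_def)
  with assms show ?thesis
    by (simp add: chart_mult_ge_def taylor1_deriv del: of_nat_Suc)
qed

lemma chart_mult_ge_xmul:
  assumes "chart_mult_ge t (chart n F) M"
  shows "chart_mult_ge t (chart (Suc n) (xmul F)) M"
proof -
  have "chart (Suc n) (xmul F) = chart n F"
    by (auto simp: fun_eq_iff chart_def xmul_def Suc_diff_le)
  with assms show ?thesis by simp
qed

lemma chart_mult_ge_ymul:
  assumes M: "chart_mult_ge t (chart n F) M"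
  shows "chart_mult_ge t (chart (Suc n) (ymul F)) (Suc M)"
  unfolding chart_mult_ge_def
proof (intro allI impI)
  fix i j
  assume ij: "i + j < Suc M"
  show "taylor1 i (chart (Suc n) (ymul F) i) t j = 0"
  proof (cases i)
    case 0
    then show ?thesis by (simp add: taylor1_def chart_def ymul_def)
  next
    case (Suc i')
    have "chart (Suc n) (ymul F) (Suc i') = (\<lambda>j'. if j' < Suc i' then chart n F i' j' else 0)"
      by (auto simp: fun_eq_iff chart_def ymul_def Suc_diff_le)
    then have "taylor1 i (chart (Suc n) (ymul F) i) t j =
        taylor1 (Suc i') (\<lambda>j'. if j' < Suc i' then chart n F i' j' else 0) t j"
      using Suc by simp
    also have "\<dots> = taylor1 i' (\<lambda>j'. if j' < Suc i' then chart n F i' j' else 0) t j"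
      by (rule taylor1_truncate) auto
    also have "\<dots> = taylor1 i' (chart n F i') t j"
      by (rule taylor1_cong) simp
    also have "\<dots> = 0"
      using M ij Suc by (simp add: chart_mult_ge_def)
    finally show ?thesis .
  qed
qed

lemma chart_mult_ge_zmul:
  assumes M: "chart_mult_ge t (chart n F) M"
  shows "chart_mult_ge t (chart (Suc n) (zmul F)) (Suc M)"
  unfolding chart_mult_ge_def
proof (intro allI impI)
  fix i j
  assume ij: "i + j < Suc M"
  show "taylor1 i (chart (Suc n) (zmul F) i) t j = 0"
  proof (cases i)
    case 0
    then show ?thesis by (simp add: taylor1_def chart_def zmul_def)
  next
    case (Suc i')
    have "chart (Suc n) (zmul F) (Suc i') = (\<lambda>j'. if j' = 0 then 0 else chart n F i' (j' - 1))"
      by (auto simp: fun_eq_iff chart_def zmul_def Suc_diff_le)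
    then have "taylor1 i (chart (Suc n) (zmul F) i) t j =
        t * taylor1 i' (chart n F i') t j + (if j = 0 then 0 else taylor1 i' (chart n F i') t (j - 1))"
      using Suc by (simp add: taylor1_mult_X)
    also have "\<dots> = 0"
      using M ij Suc by (simp add: chart_mult_ge_def)
    finally show ?thesis .
  qed
qed

lemma chart_mult_ge_linmul:
  assumes "chart_mult_ge t (chart n F) M"
  shows "chart_mult_ge t (chart (Suc n) (linmul \<alpha> \<beta> \<gamma> F)) M"
proof -
  have "chart (Suc n) (linmul \<alpha> \<beta> \<gamma> F) i =
      (\<lambda>j. \<alpha> * chart (Suc n) (xmul F) i j + \<beta> * chart (Suc n) (ymul F) i j + \<gamma> * chart (Suc n) (zmul F) i j)"
    for i by (simp add: fun_eq_iff chart_def linmul_def)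
  moreover have "chart_mult_ge t (chart (Suc n) G) M" if "G \<in> {xmul F, ymul F, zmul F}" for G
    using that chart_mult_ge_xmul[OF assms] chart_mult_ge_mono[OF chart_mult_ge_ymul[OF assms]]
      chart_mult_ge_mono[OF chart_mult_ge_zmul[OF assms]] by auto
  ultimately show ?thesis
    by (simp add: chart_mult_ge_def taylor1_lincomb)
qed

lemma chart_mult_ge_le:
  assumes "homog_poly n F" and F: "F a b c \<noteq> 0" and M: "chart_mult_ge t (chart n F) M"
  shows "M \<le> 2 * n"
proof (rule ccontr)
  assume "\<not> M \<le> 2 * n"
  have abc: "a + b + c = n" using homog_polyD[OF assms(1) F] .
  have "taylor1 (b + c) (chart n F (b + c)) t j = 0" for j
  proof (cases "j \<le> b + c")
    case True
    then show ?thesis using M \<open>\<not> M \<le> 2 * n\<close> abc by (simp add: chart_mult_ge_def)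
  qed (simp add: taylor1_eq_0)
  then have "chart n F (b + c) c = 0" by (rule taylor1_all_zero) simp
  moreover have "chart n F (b + c) c = F a b c"
    by (simp add: chart_def abc[symmetric])
  ultimately show False using F by simp
qed

lemma chart_mult_ge_of_order:
  assumes "\<forall>a b c. F a b c \<noteq> 0 \<longrightarrow> \<mu> \<le> b + c"
  shows "chart_mult_ge t (chart n F) \<mu>"
proof -
  have "chart n F i = (\<lambda>j. 0)" if "i < \<mu>" for i
    using assms that by (force simp: fun_eq_iff chart_def)
  then show ?thesis by (simp add: chart_mult_ge_def)
qed

lemma mult2_ge_iff_chart_mult_ge:
  assumes "\<And>i j. h i j \<noteq> 0 \<Longrightarrow> j \<le> i \<and> i \<le> N"
  shows "mult2_ge N h (0, t) M \<longleftrightarrow> chart_mult_ge t h M"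
proof -
  have "taylor2 N h (0, t) i j = taylor1 i (h i) t j" for i j
  proof -
    have "taylor2 N h (0, t) i j = taylor1 N (\<lambda>a. taylor1 N (h a) t j) 0 i"
      by (simp add: taylor2_def taylor1_def sum_distrib_left sum_distrib_right mult_ac)
    also have "\<dots> = (if i \<le> N then taylor1 N (h i) t j else 0)"
      by (rule taylor1_at_0)
    also have "\<dots> = taylor1 i (h i) t j"
    proof (cases "i \<le> N")
      case True
      have "taylor1 N (h i) t j = taylor1 i (h i) t j"
        by (rule taylor1_truncate) (use assms True in force)+
      with True show ?thesis by simp
    next
      case False
      then have "h i j' = 0" for j' using assms by force
      with False show ?thesis by (simp add: taylor1_def)
    qed
    finally show ?thesis .
  qed
  then show ?thesis by (simp add: mult2_ge_def chart_mult_ge_def)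
qed

text \<open>Multiplicity of the pullback of \<open>F\<close> at the point of \<open>E1\<close> with tangent direction \<open>[a : b]\<close>;
  the direction \<open>[0 : 1]\<close> is covered by the chart with \<open>y\<close> and \<open>z\<close> exchanged.\<close>
fun exc_mult_ge :: "nat \<Rightarrow> poly3 \<Rightarrow> complex \<times> complex \<Rightarrow> nat \<Rightarrow> bool" where
  "exc_mult_ge n F (a, b) M \<longleftrightarrow>
     (if a \<noteq> 0 then chart_mult_ge (b / a) (chart n F) M else chart_mult_ge 0 (chart n (swap_yz F)) M)"

lemma exc_mult_ge_mono: "exc_mult_ge n F ab M \<Longrightarrow> M' \<le> M \<Longrightarrow> exc_mult_ge n F ab M'"
  by (cases ab) (auto intro: chart_mult_ge_mono)

lemma exc_mult_ge_dx: "exc_mult_ge (Suc n) F ab M \<Longrightarrow> exc_mult_ge n (dx F) ab M"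
  by (cases ab) (auto intro: chart_mult_ge_dx)

lemma exc_mult_ge_dy: "exc_mult_ge (Suc n) F ab M \<Longrightarrow> exc_mult_ge n (dy F) ab (M - 2)"
  by (cases ab) (auto intro: chart_mult_ge_dy chart_mult_ge_dz)

lemma exc_mult_ge_dz: "exc_mult_ge (Suc n) F ab M \<Longrightarrow> exc_mult_ge n (dz F) ab (M - 2)"
  by (cases ab) (auto intro: chart_mult_ge_dy chart_mult_ge_dz)

lemma exc_mult_ge_xmul: "exc_mult_ge n F ab M \<Longrightarrow> exc_mult_ge (Suc n) (xmul F) ab M"
  by (cases ab) (auto intro: chart_mult_ge_xmul)

lemma exc_mult_ge_ymul: "exc_mult_ge n F ab M \<Longrightarrow> exc_mult_ge (Suc n) (ymul F) ab (Suc M)"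
  by (cases ab) (auto intro: chart_mult_ge_ymul chart_mult_ge_zmul)

lemma exc_mult_ge_zmul: "exc_mult_ge n F ab M \<Longrightarrow> exc_mult_ge (Suc n) (zmul F) ab (Suc M)"
  by (cases ab) (auto intro: chart_mult_ge_ymul chart_mult_ge_zmul)

lemma exc_mult_ge_linmul: "exc_mult_ge n F ab M \<Longrightarrow> exc_mult_ge (Suc n) (linmul \<alpha> \<beta> \<gamma> F) ab M"
  by (cases ab) (auto intro: chart_mult_ge_linmul)

lemma exc_mult_ge_le:
  assumes "homog_poly n F" and "F a b c \<noteq> 0" and "exc_mult_ge n F ab M"
  shows "M \<le> 2 * n"
proof -
  have "swap_yz F a c b \<noteq> 0" using assms(2) by (simp add: swap_yz_def)
  then show ?thesis
    using assms chart_mult_ge_le[OF assms(1,2)] chart_mult_ge_le[OF homog_poly_swap_yz[OF assms(1)]]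
    by (cases ab) (auto split: if_splits)
qed

lemma exc_mult_ge_of_order:
  assumes "\<forall>a b c. F a b c \<noteq> 0 \<longrightarrow> \<mu> \<le> b + c"
  shows "exc_mult_ge n F ab \<mu>"
proof -
  have "\<forall>a b c. swap_yz F a b c \<noteq> 0 \<longrightarrow> \<mu> \<le> b + c"
    using assms by (metis add.commute swap_yz_def)
  then show ?thesis
    using assms by (cases ab) (simp add: chart_mult_ge_of_order)
qed

text \<open>Multiplicity of the total transform \<open>f\<^sup>*C\<close> of \<open>C = {F = 0}\<close>, exceptional components included;
  the charts at \<open>E2\<close> are those at \<open>E1\<close> with \<open>x\<close> and \<open>y\<close> exchanged.\<close>
fun pullback_mult_ge :: "nat \<Rightarrow> poly3 \<Rightarrow> S2pt \<Rightarrow> nat \<Rightarrow> bool" where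
  "pullback_mult_ge n F (Off p) M \<longleftrightarrow> mult3_ge n F p M"
| "pullback_mult_ge n F (OnE1 ab) M \<longleftrightarrow> exc_mult_ge n F ab M"
| "pullback_mult_ge n F (OnE2 ab) M \<longleftrightarrow> exc_mult_ge n (swap_xy F) ab M"

lemma mult_ge_iff_pullback_mult_ge:
  "mult_ge d F q m \<longleftrightarrow> pullback_mult_ge (3 * d) F q (m + (case q of Off _ \<Rightarrow> 0 | _ \<Rightarrow> d))"
proof -
  have supp: "chart n G i j \<noteq> 0 \<Longrightarrow> j \<le> i \<and> i \<le> n" for n G i j
    by (simp add: chart_def split: if_splits)
  have "mult2_ge (3 * d) (chart (3 * d) G) (0, t) M \<longleftrightarrow> chart_mult_ge t (chart (3 * d) G) M" for G t M
    by (rule mult2_ge_iff_chart_mult_ge) (rule supp)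
  moreover have "(\<lambda>i j. if j \<le> i \<and> i \<le> 3 * d then F (3 * d - i) (i - j) j else 0) = chart (3 * d) F"
    "(\<lambda>i j. if j \<le> i \<and> i \<le> 3 * d then F (3 * d - i) j (i - j) else 0) = chart (3 * d) (swap_yz F)"
    "(\<lambda>i j. if j \<le> i \<and> i \<le> 3 * d then F (i - j) (3 * d - i) j else 0) = chart (3 * d) (swap_xy F)"
    "(\<lambda>i j. if j \<le> i \<and> i \<le> 3 * d then F j (3 * d - i) (i - j) else 0) = chart (3 * d) (swap_yz (swap_xy F))"
    by (simp_all add: fun_eq_iff chart_def swap_xy_def swap_yz_def)
  ultimately show ?thesis
    by (cases q) (auto simp del: mult2_ge_def)
qed

lemma pullback_mult_ge_mono: "pullback_mult_ge n F q M \<Longrightarrow> M' \<le> M \<Longrightarrow> pullback_mult_ge n F q M'"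
  by (cases q) (auto intro: mult3_ge_mono exc_mult_ge_mono)

lemma pullback_mult_ge_dx:
  assumes "homog_poly (Suc n) F" and "pullback_mult_ge (Suc n) F q M"
  shows "pullback_mult_ge n (dx F) q (M - (case q of Off _ \<Rightarrow> 1 | OnE1 _ \<Rightarrow> 0 | OnE2 _ \<Rightarrow> 2))"
  using assms mult3_ge_deriv[OF assms(1)] by (cases q) (auto intro: exc_mult_ge_dx exc_mult_ge_dy)

lemma pullback_mult_ge_dy:
  assumes "homog_poly (Suc n) F" and "pullback_mult_ge (Suc n) F q M"
  shows "pullback_mult_ge n (dy F) q (M - (case q of Off _ \<Rightarrow> 1 | OnE1 _ \<Rightarrow> 2 | OnE2 _ \<Rightarrow> 0))"
  using assms mult3_ge_deriv[OF assms(1)] by (cases q) (auto intro: exc_mult_ge_dx exc_mult_ge_dy)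

lemma pullback_mult_ge_dz:
  assumes "homog_poly (Suc n) F" and "pullback_mult_ge (Suc n) F q M"
  shows "pullback_mult_ge n (dz F) q (M - (case q of Off _ \<Rightarrow> 1 | _ \<Rightarrow> 2))"
  using assms mult3_ge_deriv[OF assms(1)] by (cases q) (auto intro: exc_mult_ge_dz)

lemma linmul_coordinate:
  "linmul 1 0 0 F = xmul F" "linmul 0 1 0 F = ymul F" "linmul 0 0 1 F = zmul F"
  by (simp_all add: fun_eq_iff linmul_def)

lemma mult3_ge_coordinate_mul:
  assumes "homog_poly n F" and "mult3_ge n F p M"
  shows "mult3_ge (Suc n) (xmul F) p M" "mult3_ge (Suc n) (ymul F) p M" "mult3_ge (Suc n) (zmul F) p M"
proof -
  obtain x y z where p: "p = (x, y, z)" by (cases p) auto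
  show "mult3_ge (Suc n) (xmul F) p M" "mult3_ge (Suc n) (ymul F) p M" "mult3_ge (Suc n) (zmul F) p M"
    using mult3_ge_linmul[OF assms[unfolded p], of 1 0 0] mult3_ge_linmul[OF assms[unfolded p], of 0 1 0]
      mult3_ge_linmul[OF assms[unfolded p], of 0 0 1]
    unfolding p linmul_coordinate by (auto elim!: mult3_ge_mono split: if_splits)
qed

lemma pullback_mult_ge_xmul:
  assumes "homog_poly n F" and "pullback_mult_ge n F q M"
  shows "pullback_mult_ge (Suc n) (xmul F) q (M + (case q of OnE2 _ \<Rightarrow> 1 | _ \<Rightarrow> 0))"
  using assms by (cases q) (auto intro: mult3_ge_coordinate_mul exc_mult_ge_xmul exc_mult_ge_ymul)

lemma pullback_mult_ge_ymul:
  assumes "homog_poly n F" and "pullback_mult_ge n F q M"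
  shows "pullback_mult_ge (Suc n) (ymul F) q (M + (case q of OnE1 _ \<Rightarrow> 1 | _ \<Rightarrow> 0))"
  using assms by (cases q) (auto intro: mult3_ge_coordinate_mul exc_mult_ge_xmul exc_mult_ge_ymul)

lemma pullback_mult_ge_zmul:
  assumes "homog_poly n F" and "pullback_mult_ge n F q M"
  shows "pullback_mult_ge (Suc n) (zmul F) q (M + (case q of Off _ \<Rightarrow> 0 | _ \<Rightarrow> 1))"
  using assms by (cases q) (auto intro: mult3_ge_coordinate_mul exc_mult_ge_zmul)

lemma pullback_mult_ge_linmul:
  assumes "homog_poly n F" and "pullback_mult_ge n F q M"
  shows "pullback_mult_ge (Suc n) (linmul \<alpha> \<beta> \<gamma> F) q M"
proof (cases q)
  case (Off p)
  obtain x y z where p: "p = (x, y, z)" by (cases p) auto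
  then show ?thesis
    using assms Off mult3_ge_linmul[OF assms(1), of x y z M \<alpha> \<beta> \<gamma>]
    by (auto elim!: mult3_ge_mono split: if_splits)
qed (use assms in \<open>auto intro: exc_mult_ge_linmul\<close>)

lemma pullback_mult_ge_le:
  assumes "homog_poly n F" and "F a b c \<noteq> 0" and "pullback_mult_ge n F q M"
  shows "M \<le> (case q of Off _ \<Rightarrow> n | _ \<Rightarrow> 2 * n)"
proof -
  have "swap_xy F b a c \<noteq> 0" using assms(2) by (simp add: swap_xy_def)
  then show ?thesis
    using assms exc_mult_ge_le[OF homog_poly_swap_xy[OF assms(1)]]
    by (cases q) (auto intro: mult3_ge_le_degree exc_mult_ge_le)
qed

section \<open>Sections of multiples of \<open>L\<^sub>2\<close>\<close>

lemma section_dL_iff: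
  "section_dL d F \<longleftrightarrow> homog_poly (3 * d) F \<and> (\<exists>a b c. F a b c \<noteq> 0) \<and>
     (\<forall>a b c. F a b c \<noteq> 0 \<longrightarrow> d \<le> b + c) \<and> (\<forall>a b c. F a b c \<noteq> 0 \<longrightarrow> d \<le> a + c)"
  by (auto simp: section_dL_def mult3_ge_P1_iff mult3_ge_P2_iff)

lemma mult_ge_0:
  assumes "section_dL d F"
  shows "mult_ge d F q 0"
proof -
  have "\<forall>a b c. F a b c \<noteq> 0 \<longrightarrow> d \<le> b + c" and "\<forall>a b c. swap_xy F a b c \<noteq> 0 \<longrightarrow> d \<le> b + c"
    using assms by (auto simp: section_dL_iff swap_xy_def)
  then show ?thesis
    by (cases q) (auto simp: mult_ge_iff_pullback_mult_ge mult3_ge_def intro: exc_mult_ge_of_order)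
qed

lemma mult_ge_le:
  assumes "section_dL d F" and "mult_ge d F q m"
  shows "m \<le> 5 * d"
proof -
  obtain a b c where "homog_poly (3 * d) F" and "F a b c \<noteq> 0"
    using assms(1) by (auto simp: section_dL_def)
  from pullback_mult_ge_le[OF this assms(2)[unfolded mult_ge_iff_pullback_mult_ge]] show ?thesis
    by (cases q) auto
qed

text \<open>Multiplication by a linear form vanishing at \<open>q\<close>: the line through \<open>q\<close> and \<open>P2\<close> if \<open>q\<close> is off
  the exceptional curves, the line \<open>P1 P2\<close> otherwise.\<close>
fun times_line :: "S2pt \<Rightarrow> poly3 \<Rightarrow> poly3" where
  "times_line (Off (x, y, z)) = linmul z 0 (- x)"
| "times_line (OnE1 _) = zmul"
| "times_line (OnE2 _) = zmul"

lemma homog_poly_times_line: "homog_poly n F \<Longrightarrow> homog_poly (Suc n) (times_line q F)"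
  by (cases q rule: times_line.cases) (auto intro: homog_poly_linmul homog_poly_mul)

definition times_cubic :: "S2pt \<Rightarrow> poly3 \<Rightarrow> poly3" where
  "times_cubic q F = xmul (ymul (times_line q F))"

lemma linmul_nonzero:
  assumes "homog_poly n F" and "F a b c \<noteq> 0" and "\<alpha> \<noteq> 0 \<or> \<gamma> \<noteq> 0"
  shows "\<exists>a b c. linmul \<alpha> 0 \<gamma> F a b c \<noteq> 0"
proof (cases "\<gamma> = 0")
  case True
  then have "linmul \<alpha> 0 \<gamma> F (Suc a) b c \<noteq> 0"
    using assms(2,3) by (simp add: linmul_def xmul_def)
  then show ?thesis by blast
next
  case False
  define C where "C = {c. \<exists>a b. F a b c \<noteq> 0}"
  have fin: "finite C"
    by (rule finite_subset[of _ "{..n}"]) (auto simp: C_def dest: homog_polyD[OF assms(1)])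
  have "c \<in> C" using assms(2) by (auto simp: C_def)
  with fin have "Max C \<in> C" by (auto intro: Max_in)
  moreover have "Suc (Max C) \<notin> C"
    using Max_ge[OF fin, of "Suc (Max C)"] by auto
  ultimately obtain a' b' where "F a' b' (Max C) \<noteq> 0" and "F a'' b'' (Suc (Max C)) = 0" for a'' b''
    by (auto simp: C_def)
  then have "linmul \<alpha> 0 \<gamma> F a' b' (Suc (Max C)) \<noteq> 0"
    using False by (auto simp: linmul_def xmul_def zmul_def)
  then show ?thesis by blast
qed

lemma pullback_mult_ge_times_line:
  assumes "homog_poly n F" and "pullback_mult_ge n F q' M"
  shows "pullback_mult_ge (Suc n) (times_line q F) q' (if q' = q then Suc M else M)"
proof (cases q)
  case (Off p)
  obtain x y z where p: "p = (x, y, z)" by (cases p) auto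
  show ?thesis
  proof (cases "q' = q")
    case True
    then show ?thesis
      using assms mult3_ge_linmul[OF assms(1), of x y z M z 0 "- x"] Off p by (simp add: algebra_simps)
  qed (use assms Off p pullback_mult_ge_linmul in auto)
next
  case (OnE1 ab)
  have "(if q' = q then Suc M else M) \<le> M + (case q' of Off _ \<Rightarrow> 0 | _ \<Rightarrow> 1)"
    using OnE1 by (cases q') auto
  with pullback_mult_ge_zmul[OF assms] show ?thesis
    unfolding OnE1 times_line.simps by (rule pullback_mult_ge_mono)
next
  case (OnE2 ab)
  have "(if q' = q then Suc M else M) \<le> M + (case q' of Off _ \<Rightarrow> 0 | _ \<Rightarrow> 1)"
    using OnE2 by (cases q') auto
  with pullback_mult_ge_zmul[OF assms] show ?thesis
    unfolding OnE2 times_line.simps by (rule pullback_mult_ge_mono)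
qed

lemma section_times_cubic:
  assumes q: "valid_pt q" and F: "section_dL d F"
  shows "section_dL (Suc d) (times_cubic q F)"
proof -
  obtain a b c where h: "homog_poly (3 * d) F" and abc: "F a b c \<noteq> 0"
    and P1: "mult3_ge (3 * d) F (1, 0, 0) d" and P2: "mult3_ge (3 * d) F (0, 1, 0) d"
    using F by (auto simp: section_dL_def)
  let ?L = "times_line q F"
  have hL: "homog_poly (Suc (3 * d)) ?L"
    using h by (rule homog_poly_times_line)
  have "\<exists>a b c. ?L a b c \<noteq> 0"
  proof (cases q rule: times_line.cases)
    case (1 x y z)
    then show ?thesis using q linmul_nonzero[OF h abc] by auto
  next
    case (2 ab)
    have "zmul F a b (Suc c) \<noteq> 0" using abc by (simp add: zmul_def)
    with 2 show ?thesis by auto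
  next
    case (3 ab)
    have "zmul F a b (Suc c) \<noteq> 0" using abc by (simp add: zmul_def)
    with 3 show ?thesis by auto
  qed
  then obtain a' b' c' where "?L a' b' c' \<noteq> 0" by blast
  then have "times_cubic q F (Suc a') (Suc b') c' \<noteq> 0"
    by (simp add: times_cubic_def xmul_def ymul_def)
  then have nonzero: "\<exists>a b c. times_cubic q F a b c \<noteq> 0" by blast
  have L_order: "mult3_ge (Suc (3 * d)) ?L p d" if "mult3_ge (3 * d) F p d" for p
    using pullback_mult_ge_times_line[OF h, of "Off p" d q] that by (auto elim: mult3_ge_mono)
  have "mult3_ge (Suc (Suc (3 * d))) (ymul ?L) (1, 0, 0) (Suc d)"
    using mult3_ge_linmul[OF hL L_order[OF P1], of 0 1 0] by (simp add: linmul_coordinate)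
  then have "mult3_ge (Suc (Suc (Suc (3 * d)))) (times_cubic q F) (1, 0, 0) (Suc d)"
    unfolding times_cubic_def by (rule mult3_ge_coordinate_mul(1)[OF homog_poly_mul(2)[OF hL]])
  moreover have "mult3_ge (Suc (Suc (3 * d))) (ymul ?L) (0, 1, 0) d"
    using mult3_ge_coordinate_mul(2)[OF hL L_order[OF P2]] .
  then have "mult3_ge (Suc (Suc (Suc (3 * d)))) (times_cubic q F) (0, 1, 0) (Suc d)"
    unfolding times_cubic_def
    using mult3_ge_linmul[OF homog_poly_mul(2)[OF hL], of 0 1 0 d 1 0 0] by (simp add: linmul_coordinate)
  moreover have "homog_poly (Suc (Suc (Suc (3 * d)))) (times_cubic q F)"
    unfolding times_cubic_def by (intro homog_poly_mul(1,2) hL)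
  moreover have deg: "3 * Suc d = Suc (Suc (Suc (3 * d)))" by simp
  ultimately show ?thesis
    using nonzero unfolding section_dL_def deg by blast
qed

lemma mult_ge_times_cubic:
  assumes F: "section_dL d F" and M: "mult_ge d F q' M"
  shows "mult_ge (Suc d) (times_cubic q F) q' (if q' = q then Suc M else M)"
proof -
  let ?w = "case q' of Off _ \<Rightarrow> 0 | _ \<Rightarrow> d"
  have h: "homog_poly (3 * d) F" using F by (simp add: section_dL_def)
  have hL: "homog_poly (Suc (3 * d)) (times_line q F)"
    using h by (rule homog_poly_times_line)
  have "pullback_mult_ge (3 * d) F q' (M + ?w)"
    using M by (simp only: mult_ge_iff_pullback_mult_ge)
  then have "pullback_mult_ge (Suc (3 * d)) (times_line q F) q' (if q' = q then Suc (M + ?w) else M + ?w)"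
    by (rule pullback_mult_ge_times_line[OF h])
  then have "pullback_mult_ge (Suc (Suc (3 * d))) (ymul (times_line q F)) q'
      ((if q' = q then Suc (M + ?w) else M + ?w) + (case q' of OnE1 _ \<Rightarrow> 1 | _ \<Rightarrow> 0))"
    by (rule pullback_mult_ge_ymul[OF hL])
  then have "pullback_mult_ge (Suc (Suc (Suc (3 * d)))) (times_cubic q F) q'
      ((if q' = q then Suc (M + ?w) else M + ?w) + (case q' of OnE1 _ \<Rightarrow> 1 | _ \<Rightarrow> 0)
        + (case q' of OnE2 _ \<Rightarrow> 1 | _ \<Rightarrow> 0))"
    unfolding times_cubic_def by (rule pullback_mult_ge_xmul[OF homog_poly_mul(2)[OF hL]])
  moreover have "(if q' = q then Suc M else M) + (case q' of Off _ \<Rightarrow> 0 | _ \<Rightarrow> Suc d) \<le>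
      (if q' = q then Suc (M + ?w) else M + ?w) + (case q' of OnE1 _ \<Rightarrow> 1 | _ \<Rightarrow> 0)
        + (case q' of OnE2 _ \<Rightarrow> 1 | _ \<Rightarrow> 0)"
    by (cases q') auto
  moreover have "3 * Suc d = Suc (Suc (Suc (3 * d)))" by simp
  ultimately show ?thesis
    unfolding mult_ge_iff_pullback_mult_ge by (simp only:) (rule pullback_mult_ge_mono)
qed

lemma times_cubic_iterate:
  assumes q: "valid_pt q" and F: "section_dL d F"
  shows "section_dL (d + k) ((times_cubic q ^^ k) F)"
    and "mult_ge d F q' M \<Longrightarrow> mult_ge (d + k) ((times_cubic q ^^ k) F) q' (if q' = q then M + k else M)"
proof (induction k)
  case (Suc k)
  {
    case 1
    show ?case using section_times_cubic[OF q Suc.IH(1)] by simp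
  next
    case 2
    show ?case using mult_ge_times_cubic[OF Suc.IH(1) Suc.IH(2)[OF 2], of q] by (cases "q' = q") simp_all
  }
qed (use F in auto)

lemma exists_section_mult_ge:
  assumes "finite Z" and "\<forall>q\<in>Z. valid_pt q"
  shows "\<exists>d F. section_dL d F \<and> (\<forall>q\<in>Z. mult_ge d F q K)"
  using assms
proof (induction Z rule: finite_induct)
  case empty
  have "section_dL 0 (\<lambda>a b c. if a = 0 \<and> b = 0 \<and> c = 0 then 1 else 0)"
    by (auto simp: section_dL_def homog_poly_def mult3_ge_def)
  then show ?case by blast
next
  case (insert q Z)
  obtain d F where F: "section_dL d F" and Z: "\<forall>q'\<in>Z. mult_ge d F q' K"
    using insert by auto
  have q: "valid_pt q" using insert.prems by simp
  let ?G = "(times_cubic q ^^ K) F"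
  have "mult_ge (d + K) ?G q' K" if "q' \<in> Z" for q'
    using times_cubic_iterate(2)[OF q F Z[rule_format, OF that], where k = K] that insert.hyps(2)
    by (cases "q' = q") auto
  moreover have "mult_ge (d + K) ?G q K"
    using times_cubic_iterate(2)[OF q F mult_ge_0[OF F, of q], where k = K] by simp
  ultimately show ?case
    using times_cubic_iterate(1)[OF q F] by blast
qed

section \<open>Lowering the degree by differentiation\<close>

lemma funpow_deriv_pullback_mult_ge:
  assumes step: "\<And>n G M. homog_poly (Suc n) G \<Longrightarrow> pullback_mult_ge (Suc n) G q M \<Longrightarrow>
      homog_poly n (D G) \<and> pullback_mult_ge n (D G) q (M - l)"
  shows "homog_poly (n + a) F \<Longrightarrow> pullback_mult_ge (n + a) F q M \<Longrightarrow>
      homog_poly n ((D ^^ a) F) \<and> pullback_mult_ge n ((D ^^ a) F) q (M - a * l)"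
proof (induction a arbitrary: n)
  case (Suc a)
  then have "homog_poly (Suc n) ((D ^^ a) F) \<and> pullback_mult_ge (Suc n) ((D ^^ a) F) q (M - a * l)"
    by simp
  then have "homog_poly n (D ((D ^^ a) F)) \<and> pullback_mult_ge n (D ((D ^^ a) F)) q (M - a * l - l)"
    using step by blast
  then show ?case
    by (simp add: diff_diff_add add.commute)
qed simp

lemma funpow_zmul_pullback_mult_ge:
  "homog_poly n F \<Longrightarrow> pullback_mult_ge n F q M \<Longrightarrow>
    homog_poly (n + k) ((zmul ^^ k) F) \<and>
    pullback_mult_ge (n + k) ((zmul ^^ k) F) q (M + k * (case q of Off _ \<Rightarrow> 0 | _ \<Rightarrow> 1))"
proof (induction k)
  case (Suc k)
  then show ?case
    using pullback_mult_ge_zmul[of "n + k" "(zmul ^^ k) F" q] homog_poly_mul(3)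
    by (cases q) (auto simp: algebra_simps)
qed simp

lemma funpow_deriv_coeff:
  "(dx ^^ a) F A B C \<noteq> 0 \<longleftrightarrow> F (A + a) B C \<noteq> 0"
  "(dy ^^ a) F A B C \<noteq> 0 \<longleftrightarrow> F A (B + a) C \<noteq> 0"
  "(dz ^^ a) F A B C \<noteq> 0 \<longleftrightarrow> F A B (C + a) \<noteq> 0"
  by (induction a arbitrary: A B C) (simp_all add: dx_def dy_def dz_def del: of_nat_Suc)

lemma funpow_zmul_coeff: "(zmul ^^ k) F A B C = (if k \<le> C then F A B (C - k) else 0)"
  by (induction k arbitrary: C) (auto simp: zmul_def)

definition lowering_op :: "nat \<Rightarrow> nat \<Rightarrow> nat \<Rightarrow> nat \<Rightarrow> poly3 \<Rightarrow> poly3" where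
  "lowering_op a b c k F = (zmul ^^ k) ((dx ^^ a) ((dy ^^ b) ((dz ^^ c) F)))"

text \<open>Conditions under which \<open>z\<^sup>k \<partial>\<^sub>x\<^sup>a \<partial>\<^sub>y\<^sup>b \<partial>\<^sub>z\<^sup>c\<close> maps a section of \<open>d L\<^sub>2\<close> to one of
  \<open>(d - 1) L\<^sub>2\<close> losing at most 5 in the multiplicity of the divisor at every point: the first four
  bound the loss off and on \<open>E1\<close>, \<open>E2\<close>; the last two say that a monomial survives and that the
  surviving ones still vanish to order \<open>d - 1\<close> at \<open>P1\<close> and \<open>P2\<close>.\<close>
definition lowering_exponents :: "nat \<Rightarrow> poly3 \<Rightarrow> nat \<Rightarrow> nat \<Rightarrow> nat \<Rightarrow> nat \<Rightarrow> bool" where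
  "lowering_exponents d F a b c k \<longleftrightarrow>
     a + b + c = k + 3 \<and> k \<le> 2 \<and> 2 * (b + c) \<le> k + 6 \<and> 2 * (a + c) \<le> k + 6 \<and>
     (\<exists>A B C. F A B C \<noteq> 0 \<and> a \<le> A \<and> b \<le> B \<and> c \<le> C) \<and>
     (\<forall>A B C. F A B C \<noteq> 0 \<and> a \<le> A \<and> b \<le> B \<and> c \<le> C \<longrightarrow>
        d + b + c \<le> B + C + k + 1 \<and> d + a + c \<le> A + C + k + 1)"

lemma lowering_op_coeff:
  "lowering_op a b c k F A B C \<noteq> 0 \<longleftrightarrow> k \<le> C \<and> F (A + a) (B + b) (C + c - k) \<noteq> 0"
  by (simp add: lowering_op_def funpow_zmul_coeff funpow_deriv_coeff)

lemma homog_poly_lowering_op: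
  assumes "homog_poly (n + k + 3) F" and "a + b + c = k + 3"
  shows "homog_poly (n + k) (lowering_op a b c k F)"
  unfolding homog_poly_def lowering_op_coeff using assms homog_polyD[OF assms(1)] by fastforce

lemma lowering_op_pullback_mult_ge:
  assumes "homog_poly (n + k + 3) F" and abc: "a + b + c = k + 3" and "pullback_mult_ge (n + k + 3) F q M"
  shows "pullback_mult_ge (n + k) (lowering_op a b c k F) q
    (case q of Off _ \<Rightarrow> M - (k + 3) | OnE1 _ \<Rightarrow> M - 2 * (b + c) + k | OnE2 _ \<Rightarrow> M - 2 * (a + c) + k)"
proof -
  let ?lx = "case q of Off _ \<Rightarrow> 1 | OnE1 _ \<Rightarrow> 0 | OnE2 _ \<Rightarrow> 2"
  let ?ly = "case q of Off _ \<Rightarrow> 1 | OnE1 _ \<Rightarrow> 2 | OnE2 _ \<Rightarrow> 0"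
  let ?lz = "case q of Off _ \<Rightarrow> 1 | _ \<Rightarrow> 2"
  have deg: "n + k + 3 = n + a + b + c" using abc by simp
  have "homog_poly (n + a + b) ((dz ^^ c) F) \<and> pullback_mult_ge (n + a + b) ((dz ^^ c) F) q (M - c * ?lz)"
    using assms(1,3) unfolding deg
    by (intro funpow_deriv_pullback_mult_ge) (auto intro: homog_poly_deriv(3) pullback_mult_ge_dz)
  then have "homog_poly (n + a) ((dy ^^ b) ((dz ^^ c) F)) \<and>
      pullback_mult_ge (n + a) ((dy ^^ b) ((dz ^^ c) F)) q (M - c * ?lz - b * ?ly)"
    by (intro funpow_deriv_pullback_mult_ge) (auto intro: homog_poly_deriv(2) pullback_mult_ge_dy)
  then have "homog_poly n ((dx ^^ a) ((dy ^^ b) ((dz ^^ c) F))) \<and>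
      pullback_mult_ge n ((dx ^^ a) ((dy ^^ b) ((dz ^^ c) F))) q (M - c * ?lz - b * ?ly - a * ?lx)"
    by (intro funpow_deriv_pullback_mult_ge) (auto intro: homog_poly_deriv(1) pullback_mult_ge_dx)
  then have "pullback_mult_ge (n + k) (lowering_op a b c k F) q
      (M - c * ?lz - b * ?ly - a * ?lx + k * (case q of Off _ \<Rightarrow> 0 | _ \<Rightarrow> 1))"
    unfolding lowering_op_def using funpow_zmul_pullback_mult_ge by blast
  then show ?thesis
    by (rule pullback_mult_ge_mono) (use abc in \<open>cases q; simp\<close>)
qed

lemma section_lowering_op:
  assumes F: "section_dL d F" and ex: "lowering_exponents d F a b c k"
  shows "section_dL (d - 1) (lowering_op a b c k F)"
proof -
  obtain A B C where ABC: "F A B C \<noteq> 0" "a \<le> A" "b \<le> B" "c \<le> C"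
    using ex by (auto simp: lowering_exponents_def)
  have h: "homog_poly (3 * d) F" using F by (simp add: section_dL_def)
  have sum: "a + b + c = k + 3" using ex by (simp add: lowering_exponents_def)
  have deg: "3 * d = 3 * (d - 1) - k + k + 3"
    using homog_polyD[OF h ABC(1)] ABC(2-4) sum by simp
  have "homog_poly (3 * (d - 1)) (lowering_op a b c k F)"
    using homog_poly_lowering_op[of "3 * (d - 1) - k" k F a b c] h sum deg by simp
  moreover have "lowering_op a b c k F (A - a) (B - b) (C - c + k) \<noteq> 0"
    using ABC by (simp add: lowering_op_coeff)
  moreover have "d - 1 \<le> B' + C' \<and> d - 1 \<le> A' + C'" if "lowering_op a b c k F A' B' C' \<noteq> 0" for A' B' C'
  proof -
    have "k \<le> C'" and "F (A' + a) (B' + b) (C' + c - k) \<noteq> 0"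
      using that by (simp_all add: lowering_op_coeff)
    then show ?thesis
      using ex unfolding lowering_exponents_def by force
  qed
  ultimately show ?thesis
    unfolding section_dL_iff by blast
qed

lemma mult_ge_lowering_op:
  assumes F: "section_dL d F" and ex: "lowering_exponents d F a b c k" and M: "mult_ge d F q (m + 5)"
  shows "mult_ge (d - 1) (lowering_op a b c k F) q m"
proof -
  obtain A B C where ABC: "F A B C \<noteq> 0" "a \<le> A" "b \<le> B" "c \<le> C"
    using ex by (auto simp: lowering_exponents_def)
  have h: "homog_poly (3 * d) F" using F by (simp add: section_dL_def)
  have abc: "a + b + c = k + 3" using ex by (simp add: lowering_exponents_def)
  have deg: "3 * d = 3 * (d - 1) - k + k + 3"
    using homog_polyD[OF h ABC(1)] ABC(2-4) abc by simp
  let ?M = "m + 5 + (case q of Off _ \<Rightarrow> 0 | _ \<Rightarrow> d)"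
  have "pullback_mult_ge (3 * d) F q ?M"
    using M by (simp only: mult_ge_iff_pullback_mult_ge)
  with h have "pullback_mult_ge (3 * (d - 1) - k + k) (lowering_op a b c k F) q
      (case q of Off _ \<Rightarrow> ?M - (k + 3) | OnE1 _ \<Rightarrow> ?M - 2 * (b + c) + k | OnE2 _ \<Rightarrow> ?M - 2 * (a + c) + k)"
    unfolding deg by (rule lowering_op_pullback_mult_ge[OF _ abc])
  moreover have "3 * (d - 1) - k + k = 3 * (d - 1)" using deg by simp
  ultimately have "pullback_mult_ge (3 * (d - 1)) (lowering_op a b c k F) q
      (case q of Off _ \<Rightarrow> ?M - (k + 3) | OnE1 _ \<Rightarrow> ?M - 2 * (b + c) + k | OnE2 _ \<Rightarrow> ?M - 2 * (a + c) + k)"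
    by (simp only:)
  then show ?thesis
    unfolding mult_ge_iff_pullback_mult_ge
    by (rule pullback_mult_ge_mono) (use ex deg in \<open>cases q; auto simp: lowering_exponents_def\<close>)
qed

lemma lowering_exponents_exist:
  assumes F: "section_dL d F" and d: "2 \<le> d"
  shows "\<exists>a b c k. lowering_exponents d F a b c k"
proof -
  obtain A0 B0 C0 where h: "homog_poly (3 * d) F" and nz: "F A0 B0 C0 \<noteq> 0"
    and P1: "\<And>A B C. F A B C \<noteq> 0 \<Longrightarrow> d \<le> B + C" and P2: "\<And>A B C. F A B C \<noteq> 0 \<Longrightarrow> d \<le> A + C"
    using F unfolding section_dL_iff by blast
  note deg = homog_polyD[OF h]
  show ?thesis
  proof (cases "\<exists>A B C. F A B C \<noteq> 0 \<and> 2 \<le> A \<and> 2 \<le> B")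
    case True
    then have "lowering_exponents d F 2 2 0 1"
      by (auto simp: lowering_exponents_def dest: P1 P2)
    then show ?thesis by blast
  next
    case no_xy: False
    have no_xy: "A \<le> 1 \<or> B \<le> 1" if "F A B C \<noteq> 0" for A B C
    proof -
      have "\<not> (2 \<le> A \<and> 2 \<le> B)" using no_xy that by blast
      then show ?thesis by linarith
    qed
    show ?thesis
    proof (cases "\<exists>A B C. F A B C \<noteq> 0 \<and> 3 \<le> B")
      case True
      have "d + 3 \<le> B + C + 1" if "F A B C \<noteq> 0" "3 \<le> B" for A B C
        using no_xy[OF that(1)] deg[OF that(1)] that(2) d by linarith
      then have "lowering_exponents d F 0 3 0 0"
        using True by (auto simp: lowering_exponents_def dest: P2)
      then show ?thesis by blast
    next
      case no_y: False
      show ?thesis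
      proof (cases "\<exists>A B C. F A B C \<noteq> 0 \<and> 3 \<le> A")
        case True
        have "d + 3 \<le> A + C + 1" if "F A B C \<noteq> 0" "3 \<le> A" for A B C
          using no_xy[OF that(1)] deg[OF that(1)] that(2) d by linarith
        then have "lowering_exponents d F 3 0 0 0"
          using True by (auto simp: lowering_exponents_def dest: P1)
        then show ?thesis by blast
      next
        case no_x: False
        have small: "A \<le> 2" "B \<le> 2" "A + B \<le> 3" if "F A B C \<noteq> 0" for A B C
          using no_x no_y no_xy[OF that] that by force+
        have "3 \<le> C0" using small[OF nz] deg[OF nz] d by linarith
        moreover have "d + 3 \<le> B + C + 1 \<and> d + 3 \<le> A + C + 1" if "F A B C \<noteq> 0" for A B C
          using small[OF that] deg[OF that] d by linarith
        ultimately have "lowering_exponents d F 0 0 3 0"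
          using nz by (auto simp: lowering_exponents_def)
        then show ?thesis by blast
      qed
    qed
  qed
qed

theorem theorem5:
  fixes Z :: "S2pt set" and m :: nat
  assumes "finite Z" and "Z \<noteq> {}" and "\<forall>q\<in>Z. valid_pt q" and "m > 0"
  shows "alpha m Z < alpha (m + 5) Z"
proof -
  define P where "P k d \<longleftrightarrow> (\<exists>F. section_dL d F \<and> (\<forall>q\<in>Z. mult_ge d F q k))" for k d
  have alpha: "alpha k Z = (LEAST d. P k d)" for k
    by (simp add: alpha_def P_def)
  let ?d = "alpha (m + 5) Z"
  have "\<exists>d. P (m + 5) d"
    using exists_section_mult_ge[OF assms(1,3)] by (simp add: P_def)
  then have "P (m + 5) ?d"
    unfolding alpha by (rule LeastI_ex)
  then obtain F where F: "section_dL ?d F" and mult: "\<forall>q\<in>Z. mult_ge ?d F q (m + 5)"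
    by (auto simp: P_def)
  obtain q where "q \<in> Z" using assms(2) by blast
  then have "m + 5 \<le> 5 * ?d" using mult_ge_le[OF F] mult by blast
  then have d: "2 \<le> ?d" using assms(4) by linarith
  then obtain a b c k where ex: "lowering_exponents ?d F a b c k"
    using lowering_exponents_exist[OF F] by blast
  have "P m (?d - 1)"
    using section_lowering_op[OF F ex] mult_ge_lowering_op[OF F ex] mult by (auto simp: P_def)
  then have "alpha m Z \<le> ?d - 1"
    unfolding alpha by (rule Least_le)
  with d show ?thesis by linarith
qed

end
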